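(* There is no pure state $|\Phi\rangle\in\mathcal H_1\otimes\mathcal H_2\otimes\mathcal H_3\otimes\mathcal H_4$, $\mathcal H_i=\mathbb C^2$, whose Schmidt ranks satisfy simultaneously $\mathrm{Sch}\#^{3,4}_{1,2}(|\Phi\rangle)=4$, $\mathrm{Sch}\#^{1,3}_{2,4}(|\Phi\rangle)=2$ and $\mathrm{Sch}\#^{1,4}_{2,3}(|\Phi\rangle)=2$.
   Context: $\mathrm{Sch}\#^{S}_{T}(|\Phi\rangle)$ denotes the Schmidt rank of $|\Phi\rangle$ with respect to the bipartition of the four qubits into the set $S$ and its complement $T$ (number of nonzero Schmidt coefficients). *)

theory Defs
  imports "HOL-Analysis.Analysis"
begin

text \<open>A vector of four qubits (C^2 tensor C^2 tensor C^2 tensor C^2) is given by its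
  coefficients phi i1 i2 i3 i4 in the computational basis, each index ranging over
  the two-element type 2.\<close>

type_synonym qubit4 = "2 \<Rightarrow> 2 \<Rightarrow> 2 \<Rightarrow> 2 \<Rightarrow> complex"

definition pure_state4 :: "qubit4 \<Rightarrow> bool" where
  "pure_state4 phi \<longleftrightarrow> (\<Sum>i1\<in>UNIV. \<Sum>i2\<in>UNIV. \<Sum>i3\<in>UNIV. \<Sum>i4\<in>UNIV. (cmod (phi i1 i2 i3 i4))\<^sup>2) = 1"

text \<open>Schmidt rank across a bipartition = number of nonzero Schmidt coefficients
  = number of nonzero singular values of the coefficient matrix, i.e. its rank.
  Rows are indexed by the qubits of S, columns by those of the complement T.\<close>

definition sch_12_34 :: "qubit4 \<Rightarrow> nat" where
  "sch_12_34 phi = rank ((\<chi> r. \<chi> c. phi (fst r) (snd r) (fst c) (snd c)) :: complex^(2\<times>2)^(2\<times>2))"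

definition sch_13_24 :: "qubit4 \<Rightarrow> nat" where
  "sch_13_24 phi = rank ((\<chi> r. \<chi> c. phi (fst r) (fst c) (snd r) (snd c)) :: complex^(2\<times>2)^(2\<times>2))"

definition sch_14_23 :: "qubit4 \<Rightarrow> nat" where
  "sch_14_23 phi = rank ((\<chi> r. \<chi> c. phi (fst r) (fst c) (snd c) (snd r)) :: complex^(2\<times>2)^(2\<times>2))"

end

theory Submission
  imports Defs
begin

text \<open>If the Schmidt rank across 13|24 is at most 2, then \<open>\<Phi> = x \<otimes> u + y \<otimes> v\<close> with
  \<open>x, y\<close> on qubits 1,3 and \<open>u, v\<close> on qubits 2,4. For every such state the determinants of
  the 12|34 and 14|23 coefficient matrices are negatives of each other, by a polynomial identity
  in the coefficients of \<open>x, y, u, v\<close>. Schmidt rank 4 across 12|34 means that the first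
  determinant is nonzero, whereas Schmidt rank 2 across 14|23 makes the second one vanish.\<close>

lemma rank_eq_CARD_iff_det_nonzero:
  fixes A :: "'a::field^'n^'n"
  shows "rank A = CARD('n) \<longleftrightarrow> det A \<noteq> 0"
proof -
  have "rank A = CARD('n) \<longleftrightarrow> vec.dim (rows A) = card (cart_basis :: ('a^'n) set)"
    by (simp add: row_rank_def_gen card_cart_basis)
  also have "\<dots> \<longleftrightarrow> vec.span (rows A) = UNIV"
    using vec.dim_eq_full[of "rows A"] by (simp add: vec.dimension_def)
  also have "\<dots> \<longleftrightarrow> invertible A"
    by (simp add: invertible_left_inverse matrix_left_invertible_span_rows_gen)
  also have "\<dots> \<longleftrightarrow> det A \<noteq> 0"
    by (rule invertible_det_nz)
  finally show ?thesis .
qed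

lemma finite_card_le_2_subset_pair:
  assumes "finite B" "card B \<le> 2"
  obtains u v where "B \<subseteq> {u, v}"
proof -
  have "card B = 0 \<or> card B = 1 \<or> card B = 2" using assms(2) by linarith
  then show thesis
    using assms(1) that by (auto simp: card_1_singleton_iff card_2_iff)
qed

lemma rank_le_2_decomposition:
  fixes K :: "'a::field^'n^'m"
  assumes "rank K \<le> 2"
  obtains p q :: "'m \<Rightarrow> 'a" and u v :: "'a^'n" where "\<And>i j. K $ i $ j = p i * u $ j + q i * v $ j"
proof -
  obtain B where B: "vec.independent B" "rows K \<subseteq> vec.span B" "card B = rank K"
    using vec.basis_exists[of "rows K"] unfolding row_rank_def_gen by blast
  have "finite B" "card B \<le> 2"
    using vec.finiteI_independent B(1,3) assms by simp_all
  then obtain u v where "B \<subseteq> {u, v}"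
    by (rule finite_card_le_2_subset_pair)
  then have "vec.span B \<subseteq> vec.span {u, v}"
    by (rule vec.span_mono)
  then have rows: "row i K \<in> vec.span {u, v}" for i
    using B(2) by (auto simp: rows_def)
  have "\<forall>i. \<exists>p q. row i K = p *s u + q *s v"
  proof
    fix i
    obtain p where "row i K - p *s u \<in> vec.span {v}"
      using rows[of i] by (auto simp: vec.span_insert)
    then obtain q where "row i K - p *s u = q *s v"
      by (auto simp: vec.span_singleton)
    then have "row i K = p *s u + q *s v"
      by (simp add: algebra_simps)
    then show "\<exists>p q. row i K = p *s u + q *s v" by blast
  qed
  then obtain p q where pq: "\<And>i. row i K = p i *s u + q i *s v"
    by metis
  show thesis
  proof (rule that)
    fix i j
    have "K $ i $ j = row i K $ j" by (simp add: row_def)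
    also have "\<dots> = p i * u $ j + q i * v $ j" by (simp add: pq)
    finally show "K $ i $ j = p i * u $ j + q i * v $ j" .
  qed
qed

lemma det_pair_indexed:
  fixes A :: "'a::comm_ring_1^(2\<times>2)^(2\<times>2)"
  defines "a \<equiv> (1::2, 1::2)" and "b \<equiv> (1::2, 2::2)" and "c \<equiv> (2::2, 1::2)" and "d \<equiv> (2::2, 2::2)"
  shows "det A =
      A$a$a * A$b$b * A$c$c * A$d$d - A$a$a * A$b$b * A$c$d * A$d$c - A$a$a * A$b$c * A$c$b * A$d$d
    + A$a$a * A$b$c * A$c$d * A$d$b + A$a$a * A$b$d * A$c$b * A$d$c - A$a$a * A$b$d * A$c$c * A$d$b
    - A$a$b * A$b$a * A$c$c * A$d$d + A$a$b * A$b$a * A$c$d * A$d$c + A$a$b * A$b$c * A$c$a * A$d$d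
    - A$a$b * A$b$c * A$c$d * A$d$a - A$a$b * A$b$d * A$c$a * A$d$c + A$a$b * A$b$d * A$c$c * A$d$a
    + A$a$c * A$b$a * A$c$b * A$d$d - A$a$c * A$b$a * A$c$d * A$d$b - A$a$c * A$b$b * A$c$a * A$d$d
    + A$a$c * A$b$b * A$c$d * A$d$a + A$a$c * A$b$d * A$c$a * A$d$b - A$a$c * A$b$d * A$c$b * A$d$a
    - A$a$d * A$b$a * A$c$b * A$d$c + A$a$d * A$b$a * A$c$c * A$d$b + A$a$d * A$b$b * A$c$a * A$d$c
    - A$a$d * A$b$b * A$c$c * A$d$a - A$a$d * A$b$c * A$c$a * A$d$b + A$a$d * A$b$c * A$c$b * A$d$a"
proof -
  have "finite {b, c, d}" "a \<notin> {b, c, d}" "finite {c, d}" "b \<notin> {c, d}" "finite {d}" "c \<notin> {d}"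
    by (auto simp: a_def b_def c_def d_def)
  note insert_perms = sum_over_permutations_insert[OF this(1,2)] sum_over_permutations_insert[OF this(3,4)]
    sum_over_permutations_insert[OF this(5,6)]
  have UNIV_eq: "(UNIV :: (2\<times>2) set) = {a, b, c, d}"
    unfolding a_def b_def c_def d_def using exhaust_2 by fastforce
  have "a \<noteq> b" "a \<noteq> c" "a \<noteq> d" "b \<noteq> c" "b \<noteq> d" "c \<noteq> d"
    "b \<noteq> a" "c \<noteq> a" "d \<noteq> a" "c \<noteq> b" "d \<noteq> b" "d \<noteq> c"
    by (auto simp: a_def b_def c_def d_def)
  then show ?thesis
    unfolding det_def UNIV_eq insert_perms permutes_sing
    by (simp add: sign_swap_id permutation_swap_id sign_compose permutation_compose algebra_simps)
qed

definition coeff_12_34 :: "qubit4 \<Rightarrow> complex^(2\<times>2)^(2\<times>2)" where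
  "coeff_12_34 phi = (\<chi> r. \<chi> c. phi (fst r) (snd r) (fst c) (snd c))"

definition coeff_13_24 :: "qubit4 \<Rightarrow> complex^(2\<times>2)^(2\<times>2)" where
  "coeff_13_24 phi = (\<chi> r. \<chi> c. phi (fst r) (fst c) (snd r) (snd c))"

definition coeff_14_23 :: "qubit4 \<Rightarrow> complex^(2\<times>2)^(2\<times>2)" where
  "coeff_14_23 phi = (\<chi> r. \<chi> c. phi (fst r) (fst c) (snd c) (snd r))"

lemma det_coeff_12_34_add_det_coeff_14_23:
  fixes x y u v :: "2 \<Rightarrow> 2 \<Rightarrow> complex"
  assumes "\<And>i1 i2 i3 i4. phi i1 i2 i3 i4 = x i1 i3 * u i2 i4 + y i1 i3 * v i2 i4"
  shows "det (coeff_12_34 phi) + det (coeff_14_23 phi) = 0"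
  unfolding coeff_12_34_def coeff_14_23_def det_pair_indexed assms by (simp; algebra)

lemma det_coeff_12_34_eq_neg_det_coeff_14_23:
  assumes "rank (coeff_13_24 phi) \<le> 2"
  shows "det (coeff_12_34 phi) = - det (coeff_14_23 phi)"
proof -
  obtain p q u v where pq: "\<And>i j. coeff_13_24 phi $ i $ j = p i * u $ j + q i * v $ j"
    using rank_le_2_decomposition[OF assms] by metis
  have "phi i1 i2 i3 i4 = p (i1, i3) * u $ (i2, i4) + q (i1, i3) * v $ (i2, i4)" for i1 i2 i3 i4
    using pq[of "(i1, i3)" "(i2, i4)"] by (simp add: coeff_13_24_def)
  then have "det (coeff_12_34 phi) + det (coeff_14_23 phi) = 0"
    by (rule det_coeff_12_34_add_det_coeff_14_23[where x = "\<lambda>i k. p (i, k)" and y = "\<lambda>i k. q (i, k)"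
          and u = "\<lambda>j l. u $ (j, l)" and v = "\<lambda>j l. v $ (j, l)"])
  then show ?thesis
    by (simp add: eq_neg_iff_add_eq_0)
qed

theorem mainTheorem8:
  shows "\<not> (\<exists>phi :: qubit4. pure_state4 phi \<and> sch_12_34 phi = 4 \<and> sch_13_24 phi = 2 \<and> sch_14_23 phi = 2)"
proof
  assume "\<exists>phi :: qubit4. pure_state4 phi \<and> sch_12_34 phi = 4 \<and> sch_13_24 phi = 2 \<and> sch_14_23 phi = 2"
  then obtain phi :: qubit4 where sch: "sch_12_34 phi = 4" "sch_13_24 phi = 2" "sch_14_23 phi = 2"
    by blast
  have "rank (coeff_12_34 phi) = CARD(2 \<times> 2)"
    using sch(1) by (simp add: sch_12_34_def coeff_12_34_def)
  then have "det (coeff_12_34 phi) \<noteq> 0"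
    using rank_eq_CARD_iff_det_nonzero by blast
  moreover have "rank (coeff_14_23 phi) \<noteq> CARD(2 \<times> 2)"
    using sch(3) by (simp add: sch_14_23_def coeff_14_23_def)
  then have "det (coeff_14_23 phi) = 0"
    using rank_eq_CARD_iff_det_nonzero by blast
  moreover have "rank (coeff_13_24 phi) \<le> 2"
    using sch(2) by (simp add: sch_13_24_def coeff_13_24_def)
  ultimately show False
    using det_coeff_12_34_eq_neg_det_coeff_14_23 by simp
qed

end
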